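(* Let $m = m_0 + x m_1 \in R_r$ satisfy $m \equiv x \pmod t$ and $\deg m_1 - \deg m_0 < -1$, and let $N \ge 1$. The map $\Phi_m : R_r/(t^N) \to \{0,1,x,1+x\}^N$ sending the class of $f$ to the first $N$ terms of its parity sequence is well defined and is a bijection. Moreover, for each $(p_0,\dots,p_{N-1}) \in \{0,1,x,1+x\}^N$, with $s(N) = \#\{0 \le k < N : p_k = 1+x\}$, there exist $g_{N-1}, h_{N-1} \in R_r$ with $\deg g_{N-1} < N$ and $\deg h_{N-1} < s(N)\deg m$ such that the elements of $R_r$ whose parity sequence begins with $(p_0,\dots,p_{N-1})$ are exactly those of the form $f = g_{N-1} + t^N q$ with $q \in R_r$, and for each such $f$ one has $T^N(f) = h_{N-1} + m^{s(N)} q$. In particular, the first $N$ parity terms of a uniformly random element of $R_r$ of degree $< N$ are uniformly distributed on $\{0,1,x,1+x\}^N$.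
   Context: Let $r(t) = t^2 + t + 1$ and $R_r = \mathbb{F}_2[x,t]/(x^2 + tx + r(t))$. Every $f \in R_r$ is uniquely $f = f_0(t) + x f_1(t)$ with $f_0, f_1 \in \mathbb{F}_2[t]$, and $\deg f = \max\{\deg f_0, \deg f_1\}$ (degrees in $t$, $\deg 0 = -\infty$). Modulo $t$ every element is congruent to exactly one of $0, 1, x, 1+x$. For $m \in R_r$ with $m \equiv x \pmod t$, the $mx+1$ map $T: R_r \to R_r$ is $T(f) = (mf + 1 + x)/t$ if $f \equiv 1+x$, $T(f) = (f+x)/t$ if $f \equiv x$, $T(f) = (f+1)/t$ if $f \equiv 1$, and $T(f) = f/t$ if $f \equiv 0 \pmod t$. The parity sequence of $f$ is $(p_0,p_1,\dots)$ where $p_k \in \{0,1,x,1+x\}$ is the residue of $T^k(f)$ modulo $t$. *)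

theory Defs
  imports "HOL-Library.Z2" "HOL-Computational_Algebra.Polynomial"
    "HOL-Probability.Probability_Mass_Function"
begin

text \<open>Elements of R_r = F_2[x,t]/(x^2 + t x + r(t)), r(t) = t^2 + t + 1, are represented
  by their unique normal form f0(t) + x f1(t) as the pair (f0, f1) of polynomials over F_2
  (the type bit of HOL-Library.Z2 is the field with two elements).\<close>

type_synonym R = "bit poly \<times> bit poly"

definition tP :: "bit poly" where "tP = [:0, 1:]"
definition rP :: "bit poly" where "rP = [:1, 1, 1:]"

definition zeroR :: R where "zeroR = (0, 0)"
definition oneR :: R where "oneR = (1, 0)"
definition xR :: R where "xR = (0, 1)"
definition onexR :: R where "onexR = (1, 1)"

definition addR :: "R \<Rightarrow> R \<Rightarrow> R" where
  "addR f g = (fst f + fst g, snd f + snd g)"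

text \<open>Multiplication using x^2 = t x + r(t) (characteristic 2).\<close>
definition mulR :: "R \<Rightarrow> R \<Rightarrow> R" where
  "mulR f g = (fst f * fst g + rP * snd f * snd g,
               fst f * snd g + snd f * fst g + tP * snd f * snd g)"

definition powR :: "R \<Rightarrow> nat \<Rightarrow> R" where
  "powR f n = ((mulR f) ^^ n) oneR"

definition tpowR :: "nat \<Rightarrow> R" where
  "tpowR N = (tP ^ N, 0)"

text \<open>Degree in t of a polynomial, with deg 0 = -infinity encoded as -1
  (only strict comparisons with non-negative bounds and the difference in the
  hypothesis are used, where this encoding is faithful).\<close>
definition pdeg :: "bit poly \<Rightarrow> int" where
  "pdeg p = (if p = 0 then -1 else int (degree p))"

definition degR :: "R \<Rightarrow> int" where
  "degR f = max (pdeg (fst f)) (pdeg (snd f))"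

definition residue :: "R \<Rightarrow> R" where
  "residue f = ([:coeff (fst f) 0:], [:coeff (snd f) 0:])"

text \<open>Exact division by t (applied only to multiples of t).\<close>
definition tdiv :: "R \<Rightarrow> R" where
  "tdiv f = (fst f div tP, snd f div tP)"

definition Tmap :: "R \<Rightarrow> R \<Rightarrow> R" where
  "Tmap m f =
     (if residue f = onexR then tdiv (addR (mulR m f) onexR)
      else if residue f = xR then tdiv (addR f xR)
      else if residue f = oneR then tdiv (addR f oneR)
      else tdiv f)"

definition parity :: "R \<Rightarrow> R \<Rightarrow> nat \<Rightarrow> R" where
  "parity m f k = residue ((Tmap m ^^ k) f)"

definition parity_prefix :: "R \<Rightarrow> nat \<Rightarrow> R \<Rightarrow> R list" where
  "parity_prefix m N f = map (parity m f) [0..<N]"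

definition Pars :: "nat \<Rightarrow> R list set" where
  "Pars N = {ps. length ps = N \<and> set ps \<subseteq> {zeroR, oneR, xR, onexR}}"

definition s_count :: "R list \<Rightarrow> nat" where
  "s_count ps = length (filter (\<lambda>p. p = onexR) ps)"

definition congR :: "nat \<Rightarrow> R \<Rightarrow> R \<Rightarrow> bool" where
  "congR N f g \<longleftrightarrow> (\<exists>q. f = addR g (mulR (tpowR N) q))"

definition congRel :: "nat \<Rightarrow> (R \<times> R) set" where
  "congRel N = {(f, g). congR N f g}"

definition PhiR :: "R \<Rightarrow> nat \<Rightarrow> R set \<Rightarrow> R list" where
  "PhiR m N C = the_elem (parity_prefix m N ` C)"

end

theory Submission
  imports Defs
begin

text \<open>Each step of \<open>T\<close>
  removes the residue mod \<open>t\<close> and divides by \<open>t\<close>, after multiplying by \<open>m\<close> in the case \<open>1+x\<close>.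
  Hence \<open>T\<^sup>k (f + t\<^sup>n q) = T\<^sup>k f + t\<^sup>n\<^sup>-\<^sup>k m\<^sup>s q\<close> for \<open>k \<le> n\<close>, where \<open>s\<close> counts
  the multiplying steps among the first \<open>k\<close>, and the first \<open>n\<close> parities of \<open>f\<close> only depend on
  \<open>f mod t\<^sup>n\<close>. Conversely, since \<open>m \<equiv> x\<close> is a unit mod \<open>t\<close>, the \<open>(n+1)\<close>-st parity of
  \<open>f + t\<^sup>n q\<close> is \<open>T\<^sup>n f + m\<^sup>s q\<close> mod \<open>t\<close>, which takes each of the four values for exactly one
  residue of \<open>q\<close> mod \<open>t\<close>. By induction on \<open>N\<close> every parity vector of length \<open>N\<close> is realised by
  exactly one class mod \<open>t\<^sup>N\<close>. The degree hypothesis on \<open>m\<close> makes multiplication by \<open>m\<close>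
  raise degrees by at most \<open>deg m\<close>, which bounds \<open>deg T\<^sup>N g\<close>.\<close>

lemma bit_add_self [simp]: "(a::bit) + a = 0"
  by (cases a) auto

lemma bit_cases_01: "(a::bit) = 0 \<or> a = 1"
  by (cases a) auto

lemma poly_add_self [simp]: "(p::bit poly) + p = 0"
  by (rule poly_eqI) (simp only: coeff_add coeff_0 bit_add_self)

lemma poly_add_self_left [simp]: "(p::bit poly) + (p + q) = q"
  by (simp only: add.assoc[symmetric] poly_add_self add_0)

lemma pCons_0_eq_tP_mult: "pCons 0 u = tP * u"
  by (simp add: tP_def)

lemma tP_nonzero [simp]: "tP \<noteq> 0"
  by (simp add: tP_def)

lemma coeff_tP_0 [simp]: "coeff tP 0 = 0"
  by (simp add: tP_def)

lemma coeff_rP_0 [simp]: "coeff rP 0 = 1"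
  by (simp add: rP_def)

lemma degree_tP [simp]: "degree tP = 1"
  by (simp add: tP_def)

lemma degree_rP [simp]: "degree rP = 2"
  by (simp add: rP_def)

lemma const_poly_eq_1_iff [simp]: "([:a:] = (1::bit poly)) = (a = 1)"
  by (simp add: one_pCons)


subsection \<open>Arithmetic in \<open>R\<^sub>r\<close>\<close>

definition smulR :: "bit poly \<Rightarrow> R \<Rightarrow> R" where
  "smulR p f = (p * fst f, p * snd f)"

lemma mulR_assoc: "mulR a (mulR b c) = mulR (mulR a b) c"
  by (simp add: mulR_def algebra_simps)

lemma mulR_addR: "mulR a (addR b c) = addR (mulR a b) (mulR a c)"
  by (simp add: mulR_def addR_def algebra_simps)

lemma mulR_smulR: "mulR a (smulR p c) = smulR p (mulR a c)"
  by (simp add: mulR_def smulR_def algebra_simps)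

lemma mulR_oneR [simp]: "mulR oneR q = q"
  by (simp add: mulR_def oneR_def)

lemma smulR_1 [simp]: "smulR 1 q = q"
  by (simp add: smulR_def)

lemma smulR_mult: "smulR (a * b) q = smulR a (smulR b q)"
  by (simp add: smulR_def algebra_simps)

lemma addR_smulR_zero [simp]: "addR g (smulR p (0, 0)) = g"
  by (simp add: addR_def smulR_def)

lemma powR_0 [simp]: "powR m 0 = oneR"
  by (simp add: powR_def)

lemma powR_Suc: "powR m (Suc s) = mulR m (powR m s)"
  by (simp add: powR_def)

lemma mulR_tpowR: "mulR (tpowR n) q = smulR (tP ^ n) q"
  by (simp add: mulR_def tpowR_def smulR_def)

lemma coeff_0_mulR [simp]:
  "coeff (fst (mulR a b)) 0 = coeff (fst a) 0 * coeff (fst b) 0 + coeff (snd a) 0 * coeff (snd b) 0"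
  "coeff (snd (mulR a b)) 0 = coeff (fst a) 0 * coeff (snd b) 0 + coeff (snd a) 0 * coeff (fst b) 0"
  by (simp_all add: mulR_def coeff_mult_0)

lemma coeff_0_addR [simp]:
  "coeff (fst (addR a b)) 0 = coeff (fst a) 0 + coeff (fst b) 0"
  "coeff (snd (addR a b)) 0 = coeff (snd a) 0 + coeff (snd b) 0"
  by (simp_all add: addR_def)


subsection \<open>Residues mod \<open>t\<close> and the map \<open>T\<close>\<close>

definition digits :: "R set" where
  "digits = {zeroR, oneR, xR, onexR}"

definition tquot :: "R \<Rightarrow> R" where
  "tquot f = tdiv (addR f (residue f))"

lemma residue_in_digits: "residue f \<in> digits"
  using bit_cases_01[of "coeff (fst f) 0"] bit_cases_01[of "coeff (snd f) 0"]
  by (auto simp: digits_def residue_def zeroR_def oneR_def xR_def onexR_def)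

lemma digits_iff: "c \<in> digits \<longleftrightarrow> (\<exists>a b. c = ([:a:], [:b:]))"
  using bit_cases_01
  by (auto simp: digits_def zeroR_def oneR_def xR_def onexR_def one_pCons)

lemma residue_eq_iff:
  "residue f = residue g \<longleftrightarrow> coeff (fst f) 0 = coeff (fst g) 0 \<and> coeff (snd f) 0 = coeff (snd g) 0"
  by (simp add: residue_def)

lemma residue_eq_oneR_iff: "residue f = oneR \<longleftrightarrow> coeff (fst f) 0 = 1 \<and> coeff (snd f) 0 = 0"
  by (simp add: residue_def oneR_def one_pCons)

lemma residue_eq_xR_iff: "residue f = xR \<longleftrightarrow> coeff (fst f) 0 = 0 \<and> coeff (snd f) 0 = 1"
  by (simp add: residue_def xR_def one_pCons)

lemma residue_add_smulR_tP: "residue (addR f (smulR tP u)) = residue f"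
  by (simp add: addR_def residue_def smulR_def coeff_mult_0)

lemma poly_residue_add_tquot: "[:coeff p 0:] + tP * ((p + [:coeff p 0:]) div tP) = p"
proof -
  obtain a u where p: "p = pCons a u"
    by (cases p) auto
  then have "p + [:coeff p 0:] = tP * u" "[:coeff p 0:] + tP * u = p"
    by (simp_all add: pCons_0_eq_tP_mult[symmetric])
  then show ?thesis
    by simp
qed

lemma residue_add_tquot: "f = addR (residue f) (smulR tP (tquot f))"
  using poly_residue_add_tquot[of "fst f"] poly_residue_add_tquot[of "snd f"]
  by (simp add: addR_def residue_def smulR_def tquot_def tdiv_def)

lemma tquot_add_smulR_tP: "tquot (addR f (smulR tP u)) = addR (tquot f) u"
proof -
  have "tquot (addR f (smulR tP u)) = tdiv (addR (addR f (residue f)) (smulR tP u))"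
    by (simp add: tquot_def residue_add_smulR_tP) (simp add: addR_def algebra_simps)
  also have "\<dots> = addR (tquot f) u"
    by (simp add: tquot_def tdiv_def addR_def smulR_def mult.commute[of tP])
  finally show ?thesis .
qed

lemma Tmap_eq_tquot:
  assumes "residue m = xR"
  shows "Tmap m f = tquot (if residue f = onexR then mulR m f else f)"
proof (cases "residue f = onexR")
  case True
  with assms have "residue (mulR m f) = onexR"
    by (auto simp: residue_def xR_def onexR_def)
  with True show ?thesis
    by (simp add: Tmap_def tquot_def)
next
  case False
  then have "residue f \<in> {xR, oneR, zeroR}"
    using residue_in_digits[of f] by (auto simp: digits_def)
  with False show ?thesis
    by (auto simp: Tmap_def tquot_def addR_def zeroR_def xR_def oneR_def onexR_def)
qed

lemma Tmap_add_smulR_tP: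
  assumes "residue m = xR"
  shows "Tmap m (addR f (smulR tP q))
    = addR (Tmap m f) (if residue f = onexR then mulR m q else q)"
  using assms
  by (simp add: Tmap_eq_tquot residue_add_smulR_tP mulR_addR mulR_smulR tquot_add_smulR_tP)


subsection \<open>Iterating \<open>T\<close> on a class mod \<open>t\<^sup>n\<close>\<close>

definition mult_count :: "R \<Rightarrow> nat \<Rightarrow> R \<Rightarrow> nat" where
  "mult_count m k f = s_count (parity_prefix m k f)"

lemma parity_prefix_0 [simp]: "parity_prefix m 0 f = []"
  by (simp add: parity_prefix_def)

lemma parity_prefix_Suc: "parity_prefix m (Suc k) f = parity_prefix m k f @ [parity m f k]"
  by (simp add: parity_prefix_def)

lemma mult_count_Suc:
  "mult_count m (Suc k) f = mult_count m k f + (if parity m f k = onexR then 1 else 0)"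
  by (simp add: mult_count_def parity_prefix_Suc s_count_def)

lemma Tmap_iter_add_smulR_tpow:
  assumes m: "residue m = xR" and "k \<le> n"
  shows "(Tmap m ^^ k) (addR f (smulR (tP ^ n) q))
      = addR ((Tmap m ^^ k) f) (smulR (tP ^ (n - k)) (mulR (powR m (mult_count m k f)) q))
    \<and> parity_prefix m k (addR f (smulR (tP ^ n) q)) = parity_prefix m k f"
  using \<open>k \<le> n\<close>
proof (induction k)
  case 0
  then show ?case
    by (simp add: mult_count_def s_count_def)
next
  case (Suc k)
  define A where "A = (Tmap m ^^ k) f"
  define X where "X = mulR (powR m (mult_count m k f)) q"
  have "n - k = Suc (n - Suc k)"
    using Suc.prems by simp
  with Suc have IH: "(Tmap m ^^ k) (addR f (smulR (tP ^ n) q))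
      = addR A (smulR tP (smulR (tP ^ (n - Suc k)) X))"
    and IH_prefix: "parity_prefix m k (addR f (smulR (tP ^ n) q)) = parity_prefix m k f"
    by (simp_all add: A_def X_def smulR_mult)
  have parity_eq: "parity m (addR f (smulR (tP ^ n) q)) k = parity m f k"
    by (simp add: parity_def IH residue_add_smulR_tP A_def)
  have "(Tmap m ^^ Suc k) (addR f (smulR (tP ^ n) q)) = addR (Tmap m A)
      (if residue A = onexR then mulR m (smulR (tP ^ (n - Suc k)) X) else smulR (tP ^ (n - Suc k)) X)"
    by (simp add: IH Tmap_add_smulR_tP[OF m])
  also have "\<dots> = addR ((Tmap m ^^ Suc k) f)
      (smulR (tP ^ (n - Suc k)) (mulR (powR m (mult_count m (Suc k) f)) q))"
    by (simp add: A_def X_def mult_count_Suc parity_def mulR_smulR mulR_assoc powR_Suc)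
  finally show ?case
    using IH_prefix parity_eq by (simp add: parity_prefix_Suc)
qed

corollary Tmap_iter_add_smulR_tpow_same:
  assumes "residue m = xR"
  shows "(Tmap m ^^ n) (addR f (smulR (tP ^ n) q))
    = addR ((Tmap m ^^ n) f) (mulR (powR m (mult_count m n f)) q)"
  using Tmap_iter_add_smulR_tpow[OF assms order_refl, of n f q] by simp


subsection \<open>Degree bounds\<close>

definition poly_deg_lt :: "nat \<Rightarrow> bit poly \<Rightarrow> bool" where
  "poly_deg_lt n p \<longleftrightarrow> p = 0 \<or> degree p < n"

definition deg_lt :: "nat \<Rightarrow> R \<Rightarrow> bool" where
  "deg_lt n f \<longleftrightarrow> poly_deg_lt n (fst f) \<and> poly_deg_lt n (snd f)"

lemma deg_lt_iff_degR: "deg_lt n f \<longleftrightarrow> degR f < int n"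
  by (auto simp: deg_lt_def poly_deg_lt_def degR_def pdeg_def)

lemma poly_deg_lt_add: "poly_deg_lt n p \<Longrightarrow> poly_deg_lt n q \<Longrightarrow> poly_deg_lt n (p + q)"
  unfolding poly_deg_lt_def by (cases "p = 0"; cases "q = 0") (auto intro: degree_add_less)

lemma poly_deg_lt_mono: "poly_deg_lt a p \<Longrightarrow> a \<le> b \<Longrightarrow> poly_deg_lt b p"
  unfolding poly_deg_lt_def by auto

lemma poly_deg_lt_mult: "poly_deg_lt a p \<Longrightarrow> degree q \<le> e \<Longrightarrow> poly_deg_lt (a + e) (q * p)"
  unfolding poly_deg_lt_def using degree_mult_le[of q p] by (cases "p = 0") auto

lemma poly_deg_lt_tquot:
  assumes "poly_deg_lt n p"
  shows "poly_deg_lt (n - 1) ((p + [:coeff p 0:]) div tP)"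
proof -
  obtain c u where p: "p = pCons c u"
    by (cases p) auto
  then have "(p + [:coeff p 0:]) div tP = u"
    by (simp add: pCons_0_eq_tP_mult)
  moreover have "poly_deg_lt (n - 1) u"
    using assms p unfolding poly_deg_lt_def by (cases "u = 0") auto
  ultimately show ?thesis
    by simp
qed

lemma deg_lt_tquot: "deg_lt n f \<Longrightarrow> deg_lt (n - 1) (tquot f)"
  using poly_deg_lt_tquot[of n "fst f"] poly_deg_lt_tquot[of n "snd f"]
  by (simp add: deg_lt_def tquot_def tdiv_def addR_def residue_def)

lemma deg_lt_mulR:
  assumes D: "degree (snd m) + 2 \<le> degree (fst m)" and f: "deg_lt n f"
  shows "deg_lt (n + degree (fst m)) (mulR m f)"
proof -
  let ?d = "degree (fst m)"
  have f0: "poly_deg_lt n (fst f)" and f1: "poly_deg_lt n (snd f)"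
    using f by (auto simp: deg_lt_def)
  have "degree (rP * snd m) \<le> ?d" "degree (tP * snd m) \<le> ?d"
    using degree_mult_le[of rP "snd m"] degree_mult_le[of tP "snd m"] D by simp_all
  then have "poly_deg_lt (n + ?d) (fst m * fst f)" "poly_deg_lt (n + ?d) (rP * snd m * snd f)"
    "poly_deg_lt (n + ?d) (fst m * snd f)" "poly_deg_lt (n + ?d) (snd m * fst f)"
    "poly_deg_lt (n + ?d) (tP * snd m * snd f)"
    using D by (auto intro: poly_deg_lt_mult[OF f0] poly_deg_lt_mult[OF f1])
  then show ?thesis
    by (simp add: deg_lt_def mulR_def poly_deg_lt_add)
qed

lemma deg_lt_Tmap_iter:
  assumes m: "residue m = xR" and D: "degree (snd m) + 2 \<le> degree (fst m)"
    and f: "deg_lt n f" and "k \<le> n"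
  shows "deg_lt (n - k + mult_count m k f * degree (fst m)) ((Tmap m ^^ k) f)"
  using \<open>k \<le> n\<close>
proof (induction k)
  case 0
  then show ?case
    using f by (simp add: mult_count_def s_count_def)
next
  case (Suc k)
  define A where "A = (Tmap m ^^ k) f"
  define L where "L = n - k + mult_count m k f * degree (fst m)"
  have IH: "deg_lt L A"
    using Suc by (simp add: A_def L_def)
  show ?case
  proof (cases "residue A = onexR")
    case True
    then have "(Tmap m ^^ Suc k) f = tquot (mulR m A)"
      "n - Suc k + mult_count m (Suc k) f * degree (fst m) = L + degree (fst m) - 1"
      using Tmap_eq_tquot[OF m, of A] Suc.prems by (simp_all add: A_def L_def mult_count_Suc parity_def)
    then show ?thesis
      using deg_lt_tquot[OF deg_lt_mulR[OF D IH]] by simp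
  next
    case False
    then have "(Tmap m ^^ Suc k) f = tquot A"
      "n - Suc k + mult_count m (Suc k) f * degree (fst m) = L - 1"
      using Tmap_eq_tquot[OF m, of A] Suc.prems by (simp_all add: A_def L_def mult_count_Suc parity_def)
    then show ?thesis
      using deg_lt_tquot[OF IH] by simp
  qed
qed

lemma poly_deg_lt_add_tpow_mult:
  assumes "poly_deg_lt n p1" "poly_deg_lt n p2" "p1 = p2 + tP ^ n * r"
  shows "r = 0"
proof (rule ccontr)
  assume "r \<noteq> 0"
  then have "tP ^ n * r \<noteq> 0" "degree (tP ^ n * r) = n + degree r"
    by (simp_all add: degree_mult_eq degree_power_eq)
  moreover have "tP ^ n * r = p1 + p2"
    using assms(3) by (simp add: add.commute add.left_commute)
  then have "poly_deg_lt n (tP ^ n * r)"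
    using poly_deg_lt_add[OF assms(1,2)] by simp
  ultimately show False
    by (simp add: poly_deg_lt_def)
qed

lemma deg_lt_add_smulR_tpow_eq:
  "deg_lt n f \<Longrightarrow> deg_lt n g \<Longrightarrow> f = addR g (smulR (tP ^ n) q) \<Longrightarrow> f = g"
  using poly_deg_lt_add_tpow_mult[of n "fst f" "fst g" "fst q"]
    poly_deg_lt_add_tpow_mult[of n "snd f" "snd g" "snd q"]
  by (auto simp: deg_lt_def addR_def smulR_def prod_eq_iff)


subsection \<open>The parity classes\<close>

lemma residue_powR:
  assumes "residue m = xR"
  shows "residue (powR m s) = oneR \<or> residue (powR m s) = xR"
proof (induction s)
  case 0
  then show ?case
    by (simp add: residue_def oneR_def)
next
  case (Suc s)
  have "coeff (fst m) 0 = 0" "coeff (snd m) 0 = 1"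
    using assms by (auto simp: residue_eq_xR_iff)
  with Suc show ?case
    by (auto simp: powR_Suc residue_eq_oneR_iff residue_eq_xR_iff)
qed

lemma residue_add_mulR_unit_ex:
  assumes P: "residue P = oneR \<or> residue P = xR" and p: "p \<in> digits"
  shows "\<exists>c \<in> digits. residue (addR h (mulR P c)) = p"
proof -
  obtain p0 p1 where p_eq: "p = ([:p0:], [:p1:])"
    using p digits_iff by blast
  let ?h0 = "coeff (fst h) 0" and ?h1 = "coeff (snd h) 0"
  from P show ?thesis
  proof
    assume "residue P = oneR"
    then have P0: "coeff (fst P) 0 = 1" "coeff (snd P) 0 = 0"
      by (auto simp: residue_eq_oneR_iff)
    show ?thesis
      by (rule bexI[of _ "([:p0 + ?h0:], [:p1 + ?h1:])"]) (auto simp: digits_iff P0 p_eq residue_def)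
  next
    assume "residue P = xR"
    then have P0: "coeff (fst P) 0 = 0" "coeff (snd P) 0 = 1"
      by (auto simp: residue_eq_xR_iff)
    show ?thesis
      by (rule bexI[of _ "([:p1 + ?h1:], [:p0 + ?h0:])"]) (auto simp: digits_iff P0 p_eq residue_def)
  qed
qed

lemma residue_add_mulR_unit_inj:
  assumes P: "residue P = oneR \<or> residue P = xR" and "c \<in> digits" "c' \<in> digits"
    and eq: "residue (addR h (mulR P c)) = residue (addR h (mulR P c'))"
  shows "c = c'"
proof -
  obtain a b a' b' where c: "c = ([:a:], [:b:])" and c': "c' = ([:a':], [:b':])"
    using \<open>c \<in> digits\<close> \<open>c' \<in> digits\<close> digits_iff by meson
  from eq have "coeff (fst P) 0 * a + coeff (snd P) 0 * b = coeff (fst P) 0 * a' + coeff (snd P) 0 * b'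
     \<and> coeff (fst P) 0 * b + coeff (snd P) 0 * a = coeff (fst P) 0 * b' + coeff (snd P) 0 * a'"
    by (simp only: residue_eq_iff coeff_0_addR add_left_cancel c c' coeff_0_mulR fst_conv snd_conv
        coeff_pCons_0)
  moreover from P have "(coeff (fst P) 0 = 1 \<and> coeff (snd P) 0 = 0)
      \<or> (coeff (fst P) 0 = 0 \<and> coeff (snd P) 0 = 1)"
    by (simp only: residue_eq_oneR_iff residue_eq_xR_iff)
  ultimately have "a = a' \<and> b = b'"
    by (elim disjE; simp only: mult_1_left mult_zero_left add_0_right add_0; blast)
  then show ?thesis
    by (simp add: c c')
qed

lemma parity_prefix_class_exists:
  assumes m: "residue m = xR" and "set ps \<subseteq> digits"
  shows "\<exists>g. deg_lt (length ps) g \<and>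
    (\<forall>f. parity_prefix m (length ps) f = ps \<longleftrightarrow> (\<exists>q. f = addR g (smulR (tP ^ length ps) q)))"
  using \<open>set ps \<subseteq> digits\<close>
proof (induction ps rule: rev_induct)
  case Nil
  show ?case
    by (intro exI[of _ zeroR]) (auto simp: deg_lt_def poly_deg_lt_def zeroR_def addR_def smulR_def)
next
  case (snoc p ps)
  define n where "n = length ps"
  from snoc obtain g where g: "deg_lt n g"
    and class_g: "\<And>f. parity_prefix m n f = ps \<longleftrightarrow> (\<exists>q. f = addR g (smulR (tP ^ n) q))"
    by (auto simp: n_def)
  define P where "P = powR m (s_count ps)"
  define h where "h = (Tmap m ^^ n) g"
  have "parity_prefix m n g = ps"
    using class_g[of g] by (metis addR_smulR_zero)
  then have T_class: "(Tmap m ^^ n) (addR g (smulR (tP ^ n) q)) = addR h (mulR P q)" for q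
    using Tmap_iter_add_smulR_tpow_same[OF m, of n g q] by (simp add: h_def P_def mult_count_def)
  have P: "residue P = oneR \<or> residue P = xR"
    using residue_powR[OF m] by (simp add: P_def)
  have "p \<in> digits"
    using snoc.prems by simp
  then obtain c where c: "c \<in> digits" and hc: "residue (addR h (mulR P c)) = p"
    using residue_add_mulR_unit_ex[OF P] by blast
  have split_q: "addR g (smulR (tP ^ n) (addR c (smulR tP u)))
      = addR (addR g (smulR (tP ^ n) c)) (smulR (tP ^ Suc n) u)" for u
    by (simp add: addR_def smulR_def algebra_simps)
  have "addR h (mulR P (addR c' (smulR tP u))) = addR (addR h (mulR P c')) (smulR tP (mulR P u))"
    for c' u
    by (simp add: mulR_addR mulR_smulR) (simp add: addR_def algebra_simps)
  then have parity_n: "parity m (addR g (smulR (tP ^ n) (addR c' (smulR tP u)))) n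
      = residue (addR h (mulR P c'))" for c' u
    by (simp add: parity_def T_class residue_add_smulR_tP)
  define g' where "g' = addR g (smulR (tP ^ n) c)"
  have "deg_lt (Suc n) g'"
  proof -
    obtain a b where "c = ([:a:], [:b:])"
      using c digits_iff by blast
    moreover have "poly_deg_lt (1 + n) (tP ^ n * [:a:])" "poly_deg_lt (1 + n) (tP ^ n * [:b:])"
      using degree_power_le[of tP n] by (auto intro!: poly_deg_lt_mult simp: poly_deg_lt_def)
    moreover have "poly_deg_lt (Suc n) (fst g)" "poly_deg_lt (Suc n) (snd g)"
      using g by (auto simp: deg_lt_def intro: poly_deg_lt_mono)
    ultimately show ?thesis
      by (simp add: g'_def deg_lt_def addR_def smulR_def poly_deg_lt_add)
  qed
  moreover have "parity_prefix m (Suc n) f = ps @ [p] \<longleftrightarrow> (\<exists>u. f = addR g' (smulR (tP ^ Suc n) u))"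
    for f
  proof
    assume "parity_prefix m (Suc n) f = ps @ [p]"
    then have prefix: "parity_prefix m n f = ps" and last: "parity m f n = p"
      by (simp_all add: parity_prefix_Suc)
    obtain q where f: "f = addR g (smulR (tP ^ n) q)"
      using prefix class_g by blast
    then have f_split: "f = addR g (smulR (tP ^ n) (addR (residue q) (smulR tP (tquot q))))"
      using residue_add_tquot[of q] by simp
    then have "residue (addR h (mulR P (residue q))) = p"
      using last parity_n by simp
    then have "residue q = c"
      using hc by (intro residue_add_mulR_unit_inj[OF P residue_in_digits c, where h = h]) simp
    then have "f = addR g' (smulR (tP ^ Suc n) (tquot q))"
      using f_split by (simp add: split_q g'_def)
    then show "\<exists>u. f = addR g' (smulR (tP ^ Suc n) u)"
      by blast
  next
    assume "\<exists>u. f = addR g' (smulR (tP ^ Suc n) u)"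
    then obtain u where f: "f = addR g (smulR (tP ^ n) (addR c (smulR tP u)))"
      by (auto simp: split_q g'_def)
    then have "parity_prefix m n f = ps"
      using class_g by blast
    moreover have "parity m f n = p"
      using f parity_n hc by simp
    ultimately show "parity_prefix m (Suc n) f = ps @ [p]"
      by (simp add: parity_prefix_Suc)
  qed
  ultimately show ?case
    unfolding length_append_singleton n_def by blast
qed

lemma Pars_eq: "Pars N = {ps. set ps \<subseteq> digits \<and> length ps = N}"
  unfolding Pars_def digits_def by (simp only: conj_commute)

lemma finite_Pars: "finite (Pars N)"
  unfolding Pars_eq by (rule finite_lists_length_eq) (simp add: digits_def)

lemma parity_prefix_in_Pars: "parity_prefix m N f \<in> Pars N"
  unfolding Pars_eq parity_prefix_def parity_def by (simp add: image_subset_iff residue_in_digits)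

lemma parity_prefix_class:
  assumes "residue m = xR" and "ps \<in> Pars N"
  obtains g where "deg_lt N g" and "parity_prefix m N g = ps"
    and "\<And>f. parity_prefix m N f = ps \<longleftrightarrow> (\<exists>q. f = addR g (smulR (tP ^ N) q))"
proof -
  obtain g where "deg_lt N g"
    and class_g: "\<And>f. parity_prefix m N f = ps \<longleftrightarrow> (\<exists>q. f = addR g (smulR (tP ^ N) q))"
    using parity_prefix_class_exists[OF assms(1), of ps] assms(2) unfolding Pars_eq by auto
  moreover have "parity_prefix m N g = ps"
    using class_g[of g] by (metis addR_smulR_zero)
  ultimately show thesis
    using that by blast
qed


subsection \<open>Congruence mod \<open>t\<^sup>N\<close>\<close>

lemma congR_iff: "congR N f g \<longleftrightarrow> (\<exists>q. f = addR g (smulR (tP ^ N) q))"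
  by (simp add: congR_def mulR_tpowR)

lemma congR_refl: "congR N f f"
  unfolding congR_iff by (intro exI[of _ "(0, 0)"]) simp

lemma congR_sym:
  assumes "congR N f g"
  shows "congR N g f"
proof -
  obtain q where "f = addR g (smulR (tP ^ N) q)"
    using assms unfolding congR_iff by blast
  then have "g = addR f (smulR (tP ^ N) q)"
    by (simp add: addR_def smulR_def add.assoc)
  then show ?thesis
    unfolding congR_iff by blast
qed

lemma congR_trans:
  assumes "congR N f g" and "congR N g h"
  shows "congR N f h"
proof -
  obtain q1 q2 where "f = addR g (smulR (tP ^ N) q1)" and "g = addR h (smulR (tP ^ N) q2)"
    using assms unfolding congR_iff by blast
  then have "f = addR h (smulR (tP ^ N) (addR q1 q2))"
    by (simp add: addR_def smulR_def algebra_simps)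
  then show ?thesis
    unfolding congR_iff by blast
qed

lemma equiv_congRel: "equiv UNIV (congRel N)"
  by (rule equivI)
    (auto simp: refl_on_def sym_def trans_def congRel_def intro: congR_refl congR_sym congR_trans)

lemma congR_imp_parity_prefix_eq:
  assumes "residue m = xR" and "congR N f g"
  shows "parity_prefix m N f = parity_prefix m N g"
  using assms Tmap_iter_add_smulR_tpow[OF assms(1) order_refl, of N g] by (auto simp: congR_iff)

lemma parity_prefix_eq_imp_congR:
  assumes m: "residue m = xR" and eq: "parity_prefix m N f = parity_prefix m N g"
  shows "congR N f g"
proof -
  obtain r where class_r:
    "\<And>h. parity_prefix m N h = parity_prefix m N g \<longleftrightarrow> (\<exists>q. h = addR r (smulR (tP ^ N) q))"
    using parity_prefix_class[OF m parity_prefix_in_Pars] by blast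
  then have "congR N f r" "congR N g r"
    using class_r[of f] class_r[of g] eq unfolding congR_iff by blast+
  then show ?thesis
    using congR_sym congR_trans by blast
qed

lemma PhiR_class:
  assumes "residue m = xR"
  shows "PhiR m N (congRel N `` {f}) = parity_prefix m N f"
proof -
  have class_f: "congRel N `` {f} = {g. congR N f g}"
    by (auto simp: congRel_def)
  have "\<And>g. congR N f g \<Longrightarrow> parity_prefix m N g = parity_prefix m N f"
    using congR_imp_parity_prefix_eq[OF assms] by metis
  then have "parity_prefix m N ` (congRel N `` {f}) = {parity_prefix m N f}"
    unfolding class_f using congR_refl[of N f] by blast
  then show ?thesis
    by (simp add: PhiR_def)
qed

lemma bij_betw_PhiR:
  assumes m: "residue m = xR"
  shows "bij_betw (PhiR m N) (UNIV // congRel N) (Pars N)"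
proof (rule bij_betw_imageI)
  show "inj_on (PhiR m N) (UNIV // congRel N)"
  proof (rule inj_onI)
    fix X Y
    assume "X \<in> UNIV // congRel N" "Y \<in> UNIV // congRel N" and eq: "PhiR m N X = PhiR m N Y"
    then obtain f g where X: "X = congRel N `` {f}" and Y: "Y = congRel N `` {g}"
      by (auto elim!: quotientE)
    with eq have "congR N f g"
      by (simp add: PhiR_class[OF m] parity_prefix_eq_imp_congR[OF m])
    then show "X = Y"
      unfolding X Y by (intro equiv_class_eq[OF equiv_congRel]) (simp add: congRel_def)
  qed
  have "PhiR m N ` (UNIV // congRel N) = range (parity_prefix m N)"
    by (simp add: quotient_def image_UN PhiR_class[OF m] UNION_singleton_eq_range image_image)
  also have "\<dots> = Pars N"
  proof (intro equalityI subsetI)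
    fix ps
    assume "ps \<in> Pars N"
    then obtain g where "parity_prefix m N g = ps"
      using parity_prefix_class[OF m] by blast
    then show "ps \<in> range (parity_prefix m N)"
      by blast
  qed (auto simp: parity_prefix_in_Pars)
  finally show "PhiR m N ` (UNIV // congRel N) = Pars N" .
qed

lemma degree_snd_add_2_le_degree_fst:
  assumes "residue m = xR" and "pdeg (snd m) - pdeg (fst m) < -1"
  shows "degree (snd m) + 2 \<le> degree (fst m)" and "fst m \<noteq> 0"
proof -
  have "snd m \<noteq> 0"
    using assms(1) by (auto simp: residue_eq_xR_iff)
  moreover from this show "fst m \<noteq> 0"
    using assms(2) by (auto simp: pdeg_def)
  ultimately show "degree (snd m) + 2 \<le> degree (fst m)"
    using assms(2) by (simp add: pdeg_def)
qed

lemma degR_eq_degree_fst: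
  assumes "residue m = xR" and "pdeg (snd m) - pdeg (fst m) < -1"
  shows "degR m = int (degree (fst m))"
  using degree_snd_add_2_le_degree_fst[OF assms] by (simp add: degR_def pdeg_def)

lemma parity_prefix_fibre:
  assumes m: "residue m = xR" and "pdeg (snd m) - pdeg (fst m) < -1" and ps: "ps \<in> Pars N"
  shows "\<exists>g h. degR g < int N \<and> degR h < int (s_count ps) * degR m
    \<and> (\<forall>f. parity_prefix m N f = ps \<longleftrightarrow> (\<exists>q. f = addR g (mulR (tpowR N) q)))
    \<and> (\<forall>q. (Tmap m ^^ N) (addR g (mulR (tpowR N) q)) = addR h (mulR (powR m (s_count ps)) q))"
proof -
  obtain g where g: "deg_lt N g" and g_ps: "parity_prefix m N g = ps"
    and class_g: "\<And>f. parity_prefix m N f = ps \<longleftrightarrow> (\<exists>q. f = addR g (smulR (tP ^ N) q))"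
    using parity_prefix_class[OF m ps] by blast
  from g_ps have count: "mult_count m N g = s_count ps"
    by (simp add: mult_count_def)
  define h where "h = (Tmap m ^^ N) g"
  have "deg_lt (s_count ps * degree (fst m)) h"
    using deg_lt_Tmap_iter[OF m degree_snd_add_2_le_degree_fst(1)[OF m assms(2)] g order_refl]
    by (simp add: h_def count)
  then have "degR h < int (s_count ps) * degR m"
    by (simp add: deg_lt_iff_degR degR_eq_degree_fst[OF m assms(2)])
  moreover have "\<forall>q. (Tmap m ^^ N) (addR g (mulR (tpowR N) q)) = addR h (mulR (powR m (s_count ps)) q)"
    using Tmap_iter_add_smulR_tpow_same[OF m, of N g] by (simp add: mulR_tpowR h_def count)
  moreover have "\<forall>f. parity_prefix m N f = ps \<longleftrightarrow> (\<exists>q. f = addR g (mulR (tpowR N) q))"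
    using class_g by (simp add: mulR_tpowR)
  moreover have "degR g < int N"
    using g by (simp add: deg_lt_iff_degR)
  ultimately show ?thesis
    by blast
qed

lemma bij_betw_parity_prefix_low_degree:
  assumes m: "residue m = xR"
  shows "bij_betw (parity_prefix m N) {f. degR f < int N} (Pars N)"
proof (rule bij_betw_imageI)
  show "inj_on (parity_prefix m N) {f. degR f < int N}"
  proof (rule inj_onI)
    fix f g
    assume "f \<in> {f. degR f < int N}" "g \<in> {f. degR f < int N}"
      and "parity_prefix m N f = parity_prefix m N g"
    moreover from this obtain q where "f = addR g (smulR (tP ^ N) q)"
      using parity_prefix_eq_imp_congR[OF m] unfolding congR_iff by blast
    ultimately show "f = g"
      using deg_lt_add_smulR_tpow_eq by (simp add: deg_lt_iff_degR)
  qed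
  show "parity_prefix m N ` {f. degR f < int N} = Pars N"
  proof (intro equalityI subsetI)
    fix ps
    assume "ps \<in> Pars N"
    then obtain g where "deg_lt N g" and "parity_prefix m N g = ps"
      using parity_prefix_class[OF m] by blast
    then show "ps \<in> parity_prefix m N ` {f. degR f < int N}"
      by (auto simp: deg_lt_iff_degR)
  qed (auto simp: parity_prefix_in_Pars)
qed

lemma map_pmf_parity_prefix_uniform:
  assumes "residue m = xR"
  shows "map_pmf (parity_prefix m N) (pmf_of_set {f. degR f < int N}) = pmf_of_set (Pars N)"
proof (rule map_pmf_of_set_bij_betw)
  show bij: "bij_betw (parity_prefix m N) {f. degR f < int N} (Pars N)"
    using bij_betw_parity_prefix_low_degree[OF assms] .
  show "{f. degR f < int N} \<noteq> {}"
    by (auto intro!: exI[of _ zeroR] simp: degR_def pdeg_def zeroR_def)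
  show "finite {f. degR f < int N}"
    using bij_betw_finite[OF bij] finite_Pars by blast
qed

theorem mainTheorem10:
  fixes m :: R and N :: nat
  assumes "residue m = xR"
    and "pdeg (snd m) - pdeg (fst m) < -1"
    and "N \<ge> 1"
  shows "(\<forall>f g. congR N f g \<longrightarrow> parity_prefix m N f = parity_prefix m N g)
    \<and> bij_betw (PhiR m N) (UNIV // congRel N) (Pars N)
    \<and> (\<forall>ps \<in> Pars N. \<exists>g h. degR g < int N \<and> degR h < int (s_count ps) * degR m
          \<and> (\<forall>f. parity_prefix m N f = ps \<longleftrightarrow> (\<exists>q. f = addR g (mulR (tpowR N) q)))
          \<and> (\<forall>q. (Tmap m ^^ N) (addR g (mulR (tpowR N) q))
                  = addR h (mulR (powR m (s_count ps)) q)))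
    \<and> map_pmf (parity_prefix m N) (pmf_of_set {f. degR f < int N}) = pmf_of_set (Pars N)"
  using congR_imp_parity_prefix_eq[OF assms(1)] parity_prefix_fibre[OF assms(1,2)]
  by (intro conjI allI impI ballI bij_betw_PhiR map_pmf_parity_prefix_uniform assms(1)) blast+

end
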